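(* Let $\eta_1,\dots,\eta_n$ be admissible measures on $\mathbb R$; for each $i$ let $X_i$ have law $\cosh(x)\,\eta_i(dx)$ (a probability measure), and $U_i:=\tanh(X_i)$. Define $m_i:=\eta_i(\mathbb R)$, $\varepsilon_i:=1-m_i$, $\alpha:=\sum_{i=1}^n\varepsilon_i$, and $\nu:=\sum_{i=1}^n\mathbb E U_i^2$. Then $0\le m_i\le1$ for all $i$ and $\alpha\le\nu\le2\alpha$.
   Context: A finitely supported positive measure $\eta$ on $\mathbb R$ is called admissible if $\int e^x\,\eta(dx)=\int e^{-x}\,\eta(dx)=1$. *)

theory Defs
  imports Complex_Main
begin

text \<open>A finitely supported positive measure on the reals is represented by its
  weight function w: the measure is the sum of w x times the Dirac mass at x, over
  the finite support {x. w x \<noteq> 0}; positivity means w x \<ge> 0.\<close>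

definition supp :: "(real \<Rightarrow> real) \<Rightarrow> real set" where
  "supp w = {x. w x \<noteq> 0}"

definition fin_pos_measure :: "(real \<Rightarrow> real) \<Rightarrow> bool" where
  "fin_pos_measure w \<longleftrightarrow> finite (supp w) \<and> (\<forall>x. 0 \<le> w x)"

definition integ :: "(real \<Rightarrow> real) \<Rightarrow> (real \<Rightarrow> real) \<Rightarrow> real" where
  "integ w f = (\<Sum>x\<in>supp w. w x * f x)"

definition admissible :: "(real \<Rightarrow> real) \<Rightarrow> bool" where
  "admissible w \<longleftrightarrow> fin_pos_measure w \<and> integ w exp = 1 \<and> integ w (\<lambda>x. exp (- x)) = 1"

definition mass :: "(real \<Rightarrow> real) \<Rightarrow> real" where
  "mass w = integ w (\<lambda>_. 1)"

definition law_X :: "(real \<Rightarrow> real) \<Rightarrow> (real \<Rightarrow> real)" where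
  "law_X w = (\<lambda>x. cosh x * w x)"

definition EU2 :: "(real \<Rightarrow> real) \<Rightarrow> real" where
  "EU2 w = integ (law_X w) (\<lambda>x. (tanh x)^2)"

end

theory Submission
  imports Defs
begin

text \<open>Admissibility gives \<open>\<integral> cosh d\<eta> = 1\<close>, and
  \<open>cosh x \<cdot> tanh\<^sup>2 x = cosh x - 1 / cosh x\<close>, so \<open>E U\<^sup>2 = 1 - \<integral> sech d\<eta>\<close>.
  All three bounds then follow by integrating pointwise inequalities against \<open>\<eta>\<close>:
  \<open>1 \<le> cosh\<close> gives \<open>m \<le> 1\<close>, \<open>sech \<le> 1\<close> gives \<open>\<epsilon> \<le> E U\<^sup>2\<close>, and
  \<open>2 - sech \<le> cosh\<close>, i.e. \<open>(cosh x - 1)\<^sup>2 / cosh x \<ge> 0\<close>, gives \<open>E U\<^sup>2 \<le> 2\<epsilon>\<close>.\<close>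

lemma integ_add: "integ w (\<lambda>x. f x + g x) = integ w f + integ w g"
  by (simp add: integ_def distrib_left sum.distrib)

lemma integ_diff: "integ w (\<lambda>x. f x - g x) = integ w f - integ w g"
  by (simp add: integ_def right_diff_distrib sum_subtractf)

lemma integ_cmult: "integ w (\<lambda>x. c * f x) = c * integ w f"
  by (simp add: integ_def sum_distrib_left algebra_simps)

lemma integ_nonneg:
  assumes "fin_pos_measure w" and "\<And>x. 0 \<le> f x"
  shows "0 \<le> integ w f"
  using assms by (auto simp: integ_def fin_pos_measure_def intro: sum_nonneg)

lemma integ_mono:
  assumes "fin_pos_measure w" and "\<And>x. f x \<le> g x"
  shows "integ w f \<le> integ w g"
  using integ_nonneg[OF assms(1), of "\<lambda>x. g x - f x"] assms(2)
  by (simp add: integ_diff)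

lemma integ_law_X: "integ (law_X w) f = integ w (\<lambda>x. cosh x * f x)"
proof -
  have "supp (law_X w) = supp w"
    by (simp add: supp_def law_X_def)
  then show ?thesis
    by (simp add: integ_def law_X_def mult_ac)
qed

lemma admissible_integ_cosh:
  assumes "admissible w"
  shows "integ w cosh = 1"
proof -
  have "cosh = (\<lambda>x. (1 / 2) * (exp x + exp (- x :: real)))"
    by (simp add: fun_eq_iff cosh_def)
  then have "integ w cosh = integ w (\<lambda>x. (1 / 2) * (exp x + exp (- x)))"
    by simp
  also have "\<dots> = (1 / 2) * (integ w exp + integ w (\<lambda>x. exp (- x)))"
    by (simp only: integ_cmult integ_add)
  also have "\<dots> = 1"
    using assms by (simp add: admissible_def)
  finally show ?thesis .
qed

lemma cosh_mult_tanh_square: "cosh x * (tanh x)\<^sup>2 = cosh x - 1 / (cosh x :: real)"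
proof -
  have "cosh x * (tanh x)\<^sup>2 = cosh x * ((cosh x)\<^sup>2 - 1) / (cosh x)\<^sup>2"
    by (simp add: tanh_def power_divide sinh_square_eq)
  also have "\<dots> = cosh x - 1 / cosh x"
    by (simp add: field_simps power2_eq_square)
  finally show ?thesis .
qed

lemma two_minus_inverse_cosh_le_cosh: "2 - 1 / cosh x \<le> (cosh x :: real)"
proof -
  have pos: "cosh x > 0"
    by simp
  have "cosh x - (2 - 1 / cosh x) = (cosh x - 1)\<^sup>2 / cosh x"
    using pos by (simp add: field_simps power2_eq_square)
  also have "\<dots> \<ge> 0"
    using pos by simp
  finally show ?thesis
    by simp
qed

lemma admissible_EU2_eq:
  assumes "admissible w"
  shows "EU2 w = 1 - integ w (\<lambda>x. 1 / cosh x)"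
  using assms
  by (simp add: EU2_def integ_law_X cosh_mult_tanh_square integ_diff admissible_integ_cosh)

lemma admissible_mass_bounds:
  assumes "admissible w"
  shows "0 \<le> mass w" and "mass w \<le> 1"
proof -
  have w: "fin_pos_measure w"
    using assms by (simp add: admissible_def)
  show "0 \<le> mass w"
    unfolding mass_def by (rule integ_nonneg[OF w]) simp
  have "mass w \<le> integ w cosh"
    unfolding mass_def by (rule integ_mono[OF w]) (rule cosh_real_ge_1)
  then show "mass w \<le> 1"
    by (simp add: admissible_integ_cosh[OF assms])
qed

lemma admissible_EU2_bounds:
  assumes "admissible w"
  shows "1 - mass w \<le> EU2 w" and "EU2 w \<le> 2 * (1 - mass w)"
proof -
  have w: "fin_pos_measure w"
    using assms by (simp add: admissible_def)
  have "integ w (\<lambda>x. 1 / cosh x) \<le> mass w"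
    unfolding mass_def by (rule integ_mono[OF w]) (simp add: cosh_real_ge_1)
  then show "1 - mass w \<le> EU2 w"
    by (simp add: admissible_EU2_eq[OF assms])
  have "integ w (\<lambda>x. 2 - 1 / cosh x) = 2 * mass w - integ w (\<lambda>x. 1 / cosh x)"
    using integ_diff[of w "\<lambda>_. 2"] integ_cmult[of w 2 "\<lambda>_. 1"] by (simp add: mass_def)
  moreover have "integ w (\<lambda>x. 2 - 1 / cosh x) \<le> integ w cosh"
    by (rule integ_mono[OF w]) (rule two_minus_inverse_cosh_le_cosh)
  ultimately show "EU2 w \<le> 2 * (1 - mass w)"
    by (simp add: admissible_EU2_eq[OF assms] admissible_integ_cosh[OF assms])
qed

theorem lemma2:
  fixes n :: nat and eta :: "nat \<Rightarrow> real \<Rightarrow> real"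
  assumes "\<And>i. i < n \<Longrightarrow> admissible (eta i)"
  shows "(\<forall>i<n. 0 \<le> mass (eta i) \<and> mass (eta i) \<le> 1)
       \<and> (\<Sum>i<n. 1 - mass (eta i)) \<le> (\<Sum>i<n. EU2 (eta i))
       \<and> (\<Sum>i<n. EU2 (eta i)) \<le> 2 * (\<Sum>i<n. 1 - mass (eta i))"
proof (intro conjI)
  show "\<forall>i<n. 0 \<le> mass (eta i) \<and> mass (eta i) \<le> 1"
    using admissible_mass_bounds assms by blast
  show "(\<Sum>i<n. 1 - mass (eta i)) \<le> (\<Sum>i<n. EU2 (eta i))"
    using admissible_EU2_bounds(1) assms by (intro sum_mono) simp
  have "(\<Sum>i<n. EU2 (eta i)) \<le> (\<Sum>i<n. 2 * (1 - mass (eta i)))"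
    using admissible_EU2_bounds(2) assms by (intro sum_mono) simp
  then show "(\<Sum>i<n. EU2 (eta i)) \<le> 2 * (\<Sum>i<n. 1 - mass (eta i))"
    by (simp add: sum_distrib_left)
qed

end
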